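(* Let $\mathbf u\in\{0,1\}^{\mathbb N}$ and $\sigma\in\{L,M,R\}^*$ with $\inf(\mathbf u)\ge\inf(\sigma(1\overline0))$ and $\sup(\mathbf u)\le\sup(\sigma(0\overline1))$. Then either $\mathbf u$ has a suffix equal to $\sigma(\mathbf v)$ for some $\mathbf v\in\{0,1\}^{\mathbb N}$, or $\mathbf u$ has a suffix equal to $\sigma'(\overline0)$ for some $\sigma'\in\{L,M,R\}^*M$ such that $\sigma=\sigma'\tau$ for some $\tau\in\{L,M,R\}^*$.
   Context: Infinite words over $\{0,1\}$ are ordered lexicographically; $\overline{w}$ denotes infinite repetition of $w$. For $\mathbf u=u_1u_2\cdots\in\{0,1\}^{\mathbb N}$, $\sup(\mathbf u)$ and $\inf(\mathbf u)$ are the lexicographic supremum and infimum of $\{u_ku_{k+1}\cdots:k\ge1\}$. Substitutions (monoid morphisms on words, extended letterwise to infinite words): $L:0\mapsto0,1\mapsto01$; $M:0\mapsto01,1\mapsto10$; $R:0\mapsto01,1\mapsto1$. $\{L,M,R\}^*$ is the monoid they generate under composition (including the identity), and $\{L,M,R\}^*M=\{\tau M:\tau\in\{L,M,R\}^*\}$. *)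

theory Defs
  imports "HOL-Library.Stream"
begin

text \<open>Infinite binary words are bool streams; False encodes letter 0, True encodes 1.\<close>

type_synonym word = "bool stream"

definition lex_less :: "word \<Rightarrow> word \<Rightarrow> bool" where
  "lex_less a b \<longleftrightarrow> (\<exists>n. stake n a = stake n b \<and> a !! n = False \<and> b !! n = True)"

definition lex_le :: "word \<Rightarrow> word \<Rightarrow> bool" where
  "lex_le a b \<longleftrightarrow> a = b \<or> lex_less a b"

definition lex_sup :: "word set \<Rightarrow> word" where
  "lex_sup S = (THE w. (\<forall>x\<in>S. lex_le x w) \<and> (\<forall>y. (\<forall>x\<in>S. lex_le x y) \<longrightarrow> lex_le w y))"

definition lex_inf :: "word set \<Rightarrow> word" where
  "lex_inf S = (THE w. (\<forall>x\<in>S. lex_le w x) \<and> (\<forall>y. (\<forall>x\<in>S. lex_le y x) \<longrightarrow> lex_le y w))"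

definition suffixes :: "word \<Rightarrow> word set" where
  "suffixes u = {sdrop k u | k. True}"

definition wsup :: "word \<Rightarrow> word" where
  "wsup u = lex_sup (suffixes u)"

definition winf :: "word \<Rightarrow> word" where
  "winf u = lex_inf (suffixes u)"

datatype gen = L | M | R

fun img :: "gen \<Rightarrow> bool \<Rightarrow> bool list" where
  "img L False = [False]"
| "img L True = [False, True]"
| "img M False = [False, True]"
| "img M True = [True, False]"
| "img R False = [False, True]"
| "img R True = [True]"

definition gen_app :: "gen \<Rightarrow> word \<Rightarrow> word" where
  "gen_app g s = flat (smap (img g) s)"

text \<open>An element of the monoid {L,M,R}* is a list [g1,...,gk] denoting g1 o ... o gk;
  the empty list is the identity, list append is composition.\<close>
definition subst_app :: "gen list \<Rightarrow> word \<Rightarrow> word" where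
  "subst_app \<sigma> s = foldr gen_app \<sigma> s"

end

theory Submission
  imports Defs
begin

text \<open>
  The hypotheses say that every suffix of \<open>u\<close> lies between \<open>winf (\<sigma>(1 0\<^sup>\<omega>))\<close> and
  \<open>wsup (\<sigma>(0 1\<^sup>\<omega>))\<close>; we induct on \<open>\<sigma>\<close>. For \<open>\<sigma> = g \<sigma>'\<close> put \<open>x = \<sigma>'(1 0\<^sup>\<omega>)\<close> and
  \<open>y = \<sigma>'(0 1\<^sup>\<omega>)\<close>; then \<open>winf (g x)\<close> and \<open>wsup (g y)\<close> are bounded by explicit words built
  from \<open>g (winf x)\<close> and \<open>g (wsup y)\<close>. Squeezed between these bounds, \<open>u\<close> has no factor \<open>11\<close>
  if \<open>g = L\<close> and no factor \<open>00\<close> if \<open>g = R\<close>, so a suffix of \<open>u\<close> parses as \<open>g w\<close>; since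
  \<open>g\<close> is strictly monotone, all suffixes of \<open>w\<close> lie between \<open>winf x\<close> and \<open>wsup y\<close>, and the
  induction hypothesis applies to \<open>w\<close>. For \<open>g = M\<close> the bounds forbid the factors
  \<open>0(01)\<^sup>m00\<close> and \<open>1(10)\<^sup>m11\<close>, so any two positions where \<open>u\<close> repeats a letter are
  at even distance: after the first repetition \<open>u\<close> splits into blocks \<open>01\<close> and \<open>10\<close>,
  and if there is no repetition at all, \<open>u\<close> ends in \<open>M(0\<^sup>\<omega>) = 0101\<dots>\<close>.
\<close>

section \<open>The lexicographic order\<close>

lemma lex_less_unfold:
  "lex_less a b \<longleftrightarrow> \<not> shd a \<and> shd b \<or> shd a = shd b \<and> lex_less (stl a) (stl b)"
proof
  assume "lex_less a b"
  then obtain n where n: "stake n a = stake n b" "\<not> a !! n" "b !! n"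
    unfolding lex_less_def by blast
  show "\<not> shd a \<and> shd b \<or> shd a = shd b \<and> lex_less (stl a) (stl b)"
  proof (cases n)
    case (Suc m)
    with n show ?thesis unfolding lex_less_def by auto
  qed (use n in simp)
next
  assume "\<not> shd a \<and> shd b \<or> shd a = shd b \<and> lex_less (stl a) (stl b)"
  then show "lex_less a b"
  proof
    assume "\<not> shd a \<and> shd b"
    then show ?thesis unfolding lex_less_def by (intro exI[of _ 0]) simp
  next
    assume "shd a = shd b \<and> lex_less (stl a) (stl b)"
    moreover obtain n where "stake n (stl a) = stake n (stl b)" "\<not> stl a !! n" "stl b !! n"
      using calculation unfolding lex_less_def by auto
    ultimately show ?thesis unfolding lex_less_def by (intro exI[of _ "Suc n"]) simp
  qed
qed

lemma lex_less_Stream [simp]: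
  "lex_less (x ## a) (y ## b) \<longleftrightarrow> \<not> x \<and> y \<or> x = y \<and> lex_less a b"
  by (subst lex_less_unfold) simp

lemma lex_less_induct [consumes 1, case_names head tail]:
  assumes "lex_less a b"
    and "\<And>a b. \<not> shd a \<Longrightarrow> shd b \<Longrightarrow> P a b"
    and "\<And>a b. shd a = shd b \<Longrightarrow> lex_less (stl a) (stl b) \<Longrightarrow> P (stl a) (stl b) \<Longrightarrow> P a b"
  shows "P a b"
proof -
  obtain n where "stake n a = stake n b" "\<not> a !! n" "b !! n"
    using assms(1) unfolding lex_less_def by blast
  then show ?thesis
  proof (induction n arbitrary: a b)
    case 0
    then show ?case using assms(2) by simp
  next
    case (Suc n)
    have "lex_less (stl a) (stl b)"
      using Suc.prems unfolding lex_less_def by auto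
    with Suc show ?case using assms(3) by simp
  qed
qed

lemma lex_less_irrefl: "\<not> lex_less a a"
  unfolding lex_less_def by blast

lemma lex_less_trans: "lex_less a b \<Longrightarrow> lex_less b c \<Longrightarrow> lex_less a c"
proof (induction a b arbitrary: c rule: lex_less_induct)
  case (head a b)
  then show ?case by (auto simp: lex_less_unfold[of b c] lex_less_unfold[of a c])
next
  case (tail a b)
  then show ?case by (auto simp: lex_less_unfold[of b c] lex_less_unfold[of a c])
qed

lemma lex_less_total: "a \<noteq> b \<Longrightarrow> lex_less a b \<or> lex_less b a"
proof -
  assume "a \<noteq> b"
  then obtain n where "a !! n \<noteq> b !! n"
    using smap_alt[of id a b] by (auto simp: stream.map_id)
  then show ?thesis
  proof (induction n arbitrary: a b)
    case 0
    then show ?case by (auto simp: lex_less_unfold[of a b] lex_less_unfold[of b a])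
  next
    case (Suc n)
    then show ?case by (auto simp: lex_less_unfold[of a b] lex_less_unfold[of b a])
  qed
qed

interpretation lex: linorder lex_le lex_less
  by unfold_locales
    (use lex_less_irrefl lex_less_trans lex_less_total in \<open>unfold lex_le_def; blast\<close>)+

lemma lex_le_Stream [simp]:
  "lex_le (x ## a) (y ## b) \<longleftrightarrow> \<not> x \<and> y \<or> x = y \<and> lex_le a b"
  unfolding lex_le_def by auto

lemma lex_less_shift [simp]: "lex_less (xs @- a) (xs @- b) \<longleftrightarrow> lex_less a b"
  by (induction xs) auto

lemma lex_le_shd: "lex_le a b \<Longrightarrow> shd a \<Longrightarrow> shd b"
  unfolding lex_le_def lex_less_unfold[of a b] by auto

lemma not_shd_lex_less_True_Stream: "\<not> shd a \<Longrightarrow> lex_less a (True ## s)"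
  by (cases a) simp

lemma lex_le_True_Stream: "lex_le s (True ## s)"
proof -
  have False if "lex_less a b" "a = True ## b" for a b
    using that
  proof (induction a b rule: lex_less_induct)
    case (tail a b)
    then have "stl a = True ## stl b" by (metis stream.collapse stream.sel)
    with tail.IH show ?case .
  qed simp
  then show ?thesis
    using lex.not_le by blast
qed

text \<open>
  Complementing every letter reverses the order and commutes with \<open>M\<close>; it turns statements
  about lower bounds into statements about upper bounds.
\<close>

definition flip :: "word \<Rightarrow> word" where
  "flip = smap Not"

lemma flip_flip [simp]: "flip (flip a) = a"
  unfolding flip_def by (simp add: stream.map_comp comp_def stream.map_ident)

lemma flip_Stream [simp]: "flip (x ## s) = (\<not> x) ## flip s"
  unfolding flip_def by simp

lemma shd_flip [simp]: "shd (flip s) = (\<not> shd s)"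
  unfolding flip_def by simp

lemma flip_snth [simp]: "flip s !! n = (\<not> s !! n)"
  unfolding flip_def by simp

lemma sdrop_flip [simp]: "sdrop k (flip s) = flip (sdrop k s)"
  unfolding flip_def by simp

lemma lex_less_flip [simp]: "lex_less (flip a) (flip b) \<longleftrightarrow> lex_less b a"
proof -
  have "inj Not" by (auto intro: injI)
  then show ?thesis
    unfolding lex_less_def flip_def by (auto simp: inj_map_eq_map) metis+
qed

lemma lex_le_flip [simp]: "lex_le (flip a) (flip b) \<longleftrightarrow> lex_le b a"
  unfolding lex_le_def by (metis flip_flip lex_less_flip)

lemma lex_le_False_Stream: "lex_le (False ## s) s"
  using lex_le_True_Stream[of "flip s"] lex_le_flip[of s "False ## s"] by simp

section \<open>Infima and suprema of suffixes\<close>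

primcorec greedy_inf :: "word set \<Rightarrow> word" where
  "shd (greedy_inf S) = (\<forall>x\<in>S. shd x)"
| "stl (greedy_inf S) = greedy_inf (stl ` {x \<in> S. shd x = (\<forall>y\<in>S. shd y)})"

lemma greedy_inf_lower: "x \<in> S \<Longrightarrow> lex_le (greedy_inf S) x"
proof -
  have "x \<notin> S" if "lex_less x g" "g = greedy_inf S" for x g S
    using that
  proof (induction x g arbitrary: S rule: lex_less_induct)
    case (tail x g)
    then have "stl x \<notin> stl ` {y \<in> S. shd y = shd g}" by auto
    with tail.hyps(1) show ?case by blast
  qed auto
  then show "x \<in> S \<Longrightarrow> lex_le (greedy_inf S) x"
    using lex.not_le by blast
qed

lemma greedy_inf_greatest: "(\<And>x. x \<in> S \<Longrightarrow> lex_le y x) \<Longrightarrow> lex_le y (greedy_inf S)"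
proof -
  have "\<exists>x\<in>S. lex_less x y" if "lex_less g y" "g = greedy_inf S" for g y S
    using that
  proof (induction g y arbitrary: S rule: lex_less_induct)
    case (head g y)
    then obtain x where "x \<in> S" "\<not> shd x" by auto
    with head.hyps(2) have "lex_less x y" by (simp add: lex_less_unfold[of x y])
    with \<open>x \<in> S\<close> show ?case by blast
  next
    case (tail g y)
    then obtain x where "x \<in> S" "shd x = shd g" "lex_less (stl x) (stl y)" by auto
    with tail.hyps(1) have "lex_less x y" by (simp add: lex_less_unfold[of x y])
    with \<open>x \<in> S\<close> show ?case by blast
  qed
  then show "(\<And>x. x \<in> S \<Longrightarrow> lex_le y x) \<Longrightarrow> lex_le y (greedy_inf S)"
    using lex.not_le by blast
qed

lemma lex_inf_eq_greedy_inf: "lex_inf S = greedy_inf S"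
  unfolding lex_inf_def
  by (rule the_equality)
    (auto intro: greedy_inf_lower greedy_inf_greatest lex.order.antisym)

lemma lex_sup_eq: "lex_sup S = flip (greedy_inf (flip ` S))"
proof -
  define w where "w = flip (greedy_inf (flip ` S))"
  have "x \<in> S \<Longrightarrow> lex_le x w" for x
    using greedy_inf_lower[of "flip x" "flip ` S"] unfolding w_def by (metis flip_flip lex_le_flip imageI)
  moreover have "(\<forall>x\<in>S. lex_le x y) \<Longrightarrow> lex_le w y" for y
    using greedy_inf_greatest[of "flip ` S" "flip y"] unfolding w_def by (metis flip_flip lex_le_flip imageE)
  ultimately show ?thesis
    unfolding lex_sup_def w_def[symmetric] by (intro the_equality) (auto intro: lex.order.antisym)
qed

lemma winf_le_sdrop: "lex_le (winf u) (sdrop k u)"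
  unfolding winf_def suffixes_def lex_inf_eq_greedy_inf by (auto intro: greedy_inf_lower)

lemma le_winf_iff: "lex_le c (winf u) \<longleftrightarrow> (\<forall>k. lex_le c (sdrop k u))"
  unfolding winf_def suffixes_def lex_inf_eq_greedy_inf
  by (auto intro: greedy_inf_greatest greedy_inf_lower lex.order.trans)

lemma wsup_eq_flip_winf: "wsup u = flip (winf (flip u))"
proof -
  have "flip ` suffixes u = suffixes (flip u)"
    unfolding suffixes_def by auto
  then show ?thesis
    unfolding wsup_def winf_def lex_sup_eq lex_inf_eq_greedy_inf by simp
qed

lemma sdrop_le_wsup: "lex_le (sdrop k u) (wsup u)"
  using winf_le_sdrop[of "flip u" k] lex_le_flip[of "flip (sdrop k u)" "winf (flip u)"]
  by (simp add: wsup_eq_flip_winf)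

lemma wsup_le_iff: "lex_le (wsup u) d \<longleftrightarrow> (\<forall>k. lex_le (sdrop k u) d)"
  using le_winf_iff[of "flip d" "flip u"] lex_le_flip[of "winf (flip u)" "flip d"]
  by (simp add: wsup_eq_flip_winf)

definition suffixes_within :: "word \<Rightarrow> word \<Rightarrow> word \<Rightarrow> bool" where
  "suffixes_within c d u \<longleftrightarrow> (\<forall>k. lex_le c (sdrop k u) \<and> lex_le (sdrop k u) d)"

lemma suffixes_within_iff: "suffixes_within c d u \<longleftrightarrow> lex_le c (winf u) \<and> lex_le (wsup u) d"
  unfolding suffixes_within_def le_winf_iff wsup_le_iff by blast

lemma suffixes_within_flip: "suffixes_within c d u \<Longrightarrow> suffixes_within (flip d) (flip c) (flip u)"
  unfolding suffixes_within_def by simp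

lemma suffixes_within_mono:
  "suffixes_within c d u \<Longrightarrow> lex_le c' c \<Longrightarrow> lex_le d d' \<Longrightarrow> suffixes_within c' d' u"
  unfolding suffixes_within_def by (meson lex.order.trans)

section \<open>Substitutions\<close>

lemma img_cases:
  obtains a where "img g b = [a]" | a a' where "img g b = [a, a']"
  by (cases g; cases b) auto

lemma img_not_Nil [simp]: "img g b \<noteq> []"
  by (cases g b rule: img_cases) auto

lemma img_M: "img M b = [b, \<not> b]"
  by (cases b) simp_all

lemma gen_app_Stream [simp]: "gen_app g (b ## s) = img g b @- gen_app g s"
  unfolding gen_app_def by (cases g; cases b) auto

lemma gen_app_unfold: "gen_app g w = img g (shd w) @- gen_app g (stl w)"
  by (metis gen_app_Stream stream.collapse)

lemma gen_app_shift: "gen_app g (xs @- s) = concat (map (img g) xs) @- gen_app g s"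
  by (induction xs) auto

lemma shd_gen_app: "shd (gen_app g s) = hd (img g (shd s))"
  by (subst gen_app_unfold) (cases g "shd s" rule: img_cases; simp)

lemma shd_gen_app_L [simp]: "shd (gen_app L s) = False"
  by (simp add: shd_gen_app) (cases "shd s"; simp)

lemma sdrop_eq_snth_Stream: "sdrop k s = s !! k ## sdrop (Suc k) s"
  by (metis sdrop_simps stream.collapse)

lemma gen_app_sdrop_block:
  "gen_app g (sdrop k x) = img g (x !! k) @- gen_app g (sdrop (Suc k) x)"
  by (subst gen_app_unfold) simp

lemma sdrop_gen_app: "\<exists>m. sdrop m (gen_app g w) = gen_app g (sdrop k w)"
proof
  show "sdrop (length (concat (map (img g) (stake k w)))) (gen_app g w) = gen_app g (sdrop k w)"
    by (subst (2) stake_sdrop[of k w, symmetric]) (simp only: gen_app_shift sdrop_shift; simp)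
qed

lemma sdrop_Suc_stl: "sdrop (Suc n) s = stl (sdrop n s)"
  by simp

lemma sdrop_gen_app_cases:
  obtains k where "sdrop n (gen_app g x) = gen_app g (sdrop k x)"
  | k a a' where "img g (x !! k) = [a, a']" "sdrop n (gen_app g x) = a' ## gen_app g (sdrop (Suc k) x)"
proof (induction n arbitrary: thesis)
  case 0
  show ?case by (rule "0.prems"(1)[of 0]) simp
next
  case (Suc n)
  show ?case
  proof (rule Suc.IH)
    fix k assume "sdrop n (gen_app g x) = gen_app g (sdrop k x)"
    then have k: "sdrop (Suc n) (gen_app g x) = stl (img g (x !! k) @- gen_app g (sdrop (Suc k) x))"
      by (simp only: sdrop_Suc_stl gen_app_sdrop_block)
    show thesis
    proof (cases g "x !! k" rule: img_cases)
      case (1 a)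
      with k show ?thesis by (intro Suc.prems(1)[of "Suc k"]) simp
    next
      case (2 a a')
      with k show ?thesis by (intro Suc.prems(2)[of k a a']) simp_all
    qed
  next
    fix k a a' assume "sdrop n (gen_app g x) = a' ## gen_app g (sdrop (Suc k) x)"
    then show thesis by (intro Suc.prems(1)[of "Suc k"]) (simp only: sdrop_Suc_stl stream.sel)
  qed
qed

lemma gen_app_coinduct:
  assumes "Rel u w"
    and step: "\<And>u w. Rel u w \<Longrightarrow> \<exists>u'. u = img g (shd w) @- u' \<and> Rel u' (stl w)"
  shows "u = gen_app g w"
proof -
  define Q where "Q a b \<longleftrightarrow> (\<exists>xs u w. Rel u w \<and> a = xs @- u \<and> b = xs @- gen_app g w)" for a b
  show ?thesis
  proof (rule stream.coinduct[of Q])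
    show "Q u (gen_app g w)"
      unfolding Q_def using assms(1) by (metis shift.simps(1))
  next
    fix a b assume "Q a b"
    then obtain xs u w where uw: "Rel u w" "a = xs @- u" "b = xs @- gen_app g w"
      unfolding Q_def by blast
    obtain ys u' w' where ys: "ys \<noteq> []" "Rel u' w'" "a = ys @- u'" "b = ys @- gen_app g w'"
    proof (cases xs)
      case Nil
      obtain u' where "u = img g (shd w) @- u'" "Rel u' (stl w)" using step[OF uw(1)] by blast
      with Nil uw show thesis
        by (intro that[of "img g (shd w)" u' "stl w"]) (simp_all flip: gen_app_unfold)
    next
      case Cons
      with uw show thesis by (intro that[of xs u w]) simp_all
    qed
    then have "Q (stl a) (stl b)"
      unfolding Q_def by (cases ys) auto
    moreover have "shd a = shd b"
      using ys by (cases ys) auto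
    ultimately show "shd a = shd b \<and> Q (stl a) (stl b)" by blast
  qed
qed

lemma gen_app_parse:
  assumes "P u"
    and step: "\<And>u. P u \<Longrightarrow> \<exists>b u'. u = img g b @- u' \<and> P u'"
  shows "\<exists>w. u = gen_app g w"
proof -
  define next_block where "next_block u = (SOME p. u = img g (fst p) @- snd p \<and> P (snd p))" for u
  have next_block: "u = img g (fst (next_block u)) @- snd (next_block u) \<and> P (snd (next_block u))"
    if Pu: "P u" for u
  proof -
    obtain b u' where "u = img g b @- u' \<and> P u'" using step[OF Pu] by blast
    then show ?thesis
      unfolding next_block_def
      using someI[where P = "\<lambda>p. u = img g (fst p) @- snd p \<and> P (snd p)" and x = "(b, u')"]
      by simp
  qed
  define parse where "parse u = smap fst (siterate (next_block \<circ> snd) (next_block u))" for u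
  have "u = gen_app g (parse u)"
  proof (rule gen_app_coinduct[where Rel = "\<lambda>u w. P u \<and> w = parse u"])
    show "P u \<and> parse u = parse u" using assms(1) by simp
  next
    fix u w assume "P u \<and> w = parse u"
    moreover have "shd (parse u) = fst (next_block u)" "stl (parse u) = parse (snd (next_block u))"
      unfolding parse_def by simp_all
    ultimately show "\<exists>u'. u = img g (shd w) @- u' \<and> P u' \<and> stl w = parse u'"
      using next_block by auto
  qed
  then show ?thesis by blast
qed

lemma gen_app_mono_less: "lex_less a b \<Longrightarrow> lex_less (gen_app g a) (gen_app g b)"
proof (induction a b rule: lex_less_induct)
  case (head a b)
  then have "gen_app g a = img g False @- gen_app g (stl a)" "gen_app g b = img g True @- gen_app g (stl b)"
    by (metis gen_app_unfold)+
  moreover have "\<not> shd (gen_app L (stl a))"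
    by (simp add: shd_gen_app) (cases "shd (stl a)"; simp)
  ultimately show ?case by (cases g) (simp_all add: not_shd_lex_less_True_Stream)
next
  case (tail a b)
  then show ?case by (subst (1 2) gen_app_unfold) simp
qed

lemma gen_app_less_iff [simp]: "lex_less (gen_app g a) (gen_app g b) \<longleftrightarrow> lex_less a b"
  by (metis gen_app_mono_less lex.less_asym lex.neqE lex.less_irrefl)

lemma gen_app_le_iff [simp]: "lex_le (gen_app g a) (gen_app g b) \<longleftrightarrow> lex_le a b"
  by (metis gen_app_less_iff lex.not_less)

lemma flip_gen_app_M: "flip (gen_app M w) = gen_app M (flip w)"
proof (rule gen_app_coinduct[where Rel = "\<lambda>u w. u = flip (gen_app M (flip w))"])
  fix u w assume "u = flip (gen_app M (flip w))"
  then have "u = img M (shd w) @- flip (gen_app M (flip (stl w)))"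
    by (subst (asm) gen_app_unfold) (simp add: img_M flip_def)
  then show "\<exists>u'. u = img M (shd w) @- u' \<and> u' = flip (gen_app M (flip (stl w)))"
    by blast
qed simp

lemma sset_gen_app: "b \<in> sset w \<Longrightarrow> b \<in> sset (gen_app g w)"
proof -
  assume "b \<in> sset w"
  moreover have "b \<in> set (img g b)" by (cases g; cases b) auto
  ultimately show ?thesis
    unfolding gen_app_def by (subst sset_flat) (auto simp: stream.set_map)
qed

lemma subst_app_Nil [simp]: "subst_app [] v = v"
  by (simp add: subst_app_def)

lemma subst_app_Cons [simp]: "subst_app (g # \<sigma>) v = gen_app g (subst_app \<sigma> v)"
  by (simp add: subst_app_def)

lemma sset_subst_app: "b \<in> sset w \<Longrightarrow> b \<in> sset (subst_app \<sigma> w)"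
  by (induction \<sigma>) (auto intro: sset_gen_app)

section \<open>Bounds on the extremal suffixes of an image\<close>

lemma winf_gen_app_L_ge: "lex_le (gen_app L (winf x)) (winf (gen_app L x))"
  unfolding le_winf_iff
proof
  fix n
  show "lex_le (gen_app L (winf x)) (sdrop n (gen_app L x))"
  proof (cases rule: sdrop_gen_app_cases[of n L x])
    case (2 k a a')
    then have "a' = True" by (cases "x !! k") simp_all
    with 2 show ?thesis by (simp add: lex.less_imp_le not_shd_lex_less_True_Stream)
  qed (simp add: winf_le_sdrop)
qed

lemma wsup_gen_app_L_le:
  assumes "wsup y = True ## d"
  shows "lex_le (wsup (gen_app L y)) (True ## gen_app L d)"
  unfolding wsup_le_iff
proof
  fix n
  show "lex_le (sdrop n (gen_app L y)) (True ## gen_app L d)"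
  proof (cases rule: sdrop_gen_app_cases[of n L y])
    case (1 k)
    then show ?thesis by (simp add: lex.less_imp_le not_shd_lex_less_True_Stream)
  next
    case (2 k a a')
    then have "y !! k" "a' = True" by (cases "y !! k"; simp)+
    moreover have "lex_le (sdrop k y) (True ## d)"
      using sdrop_le_wsup[of k y] assms by simp
    ultimately show ?thesis
      using 2 sdrop_eq_snth_Stream[of k y] by simp
  qed
qed

lemma winf_gen_app_R_ge:
  assumes "\<not> shd (winf x)"
  shows "lex_le (gen_app R (winf x)) (winf (gen_app R x))"
  unfolding le_winf_iff
proof
  fix n
  show "lex_le (gen_app R (winf x)) (sdrop n (gen_app R x))"
  proof (cases rule: sdrop_gen_app_cases[of n R x])
    case (2 k a a')
    then have "a' = True" by (cases "x !! k") simp_all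
    moreover have "\<not> shd (gen_app R (winf x))"
      using assms by (simp add: shd_gen_app)
    ultimately show ?thesis
      using 2 by (simp add: lex.less_imp_le not_shd_lex_less_True_Stream)
  qed (simp add: winf_le_sdrop)
qed

lemma wsup_gen_app_R_le: "lex_le (wsup (gen_app R y)) (True ## gen_app R (wsup y))"
  unfolding wsup_le_iff
proof
  fix n
  show "lex_le (sdrop n (gen_app R y)) (True ## gen_app R (wsup y))"
  proof (cases rule: sdrop_gen_app_cases[of n R y])
    case (1 k)
    have "lex_le (gen_app R (sdrop k y)) (gen_app R (wsup y))"
      by (simp add: sdrop_le_wsup)
    with 1 show ?thesis
      using lex_le_True_Stream lex.order.trans by metis
  next
    case (2 k a a')
    then have "a' = True" by (cases "y !! k") simp_all
    moreover have "lex_le (sdrop (Suc k) y) (wsup y)" by (rule sdrop_le_wsup)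
    ultimately show ?thesis using 2 by simp
  qed
qed

lemma winf_gen_app_M_ge: "lex_le (False ## gen_app M (winf x)) (winf (gen_app M x))"
  unfolding le_winf_iff
proof
  fix n
  show "lex_le (False ## gen_app M (winf x)) (sdrop n (gen_app M x))"
  proof (cases rule: sdrop_gen_app_cases[of n M x])
    case (1 k)
    then show ?thesis
      using winf_le_sdrop[of x k] lex_le_False_Stream[of "gen_app M (winf x)"]
      by (auto intro: lex.order.trans)
  next
    case (2 k a a')
    moreover have "lex_le (winf x) (sdrop (Suc k) x)" by (rule winf_le_sdrop)
    ultimately show ?thesis by (cases a') simp_all
  qed
qed

lemma wsup_gen_app_M_le: "lex_le (wsup (gen_app M y)) (True ## gen_app M (wsup y))"
proof -
  have "lex_le (False ## gen_app M (winf (flip y))) (winf (flip (gen_app M y)))"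
    using winf_gen_app_M_ge[of "flip y"] by (simp add: flip_gen_app_M)
  then have "lex_le (flip (winf (flip (gen_app M y)))) (flip (False ## gen_app M (winf (flip y))))"
    by (simp only: lex_le_flip)
  then show ?thesis
    by (simp add: wsup_eq_flip_winf flip_gen_app_M)
qed

section \<open>Desubstitution\<close>

lemma adjacent_letters_sdrop:
  "(\<And>n. Q (s !! n) (s !! Suc n)) \<Longrightarrow> Q (sdrop k s !! n) (sdrop k s !! Suc n)"
  by (metis sdrop_snth add_Suc_right)

lemma sdrop_Suc_eqI: "sdrop m u = x ## s \<Longrightarrow> sdrop (Suc m) u = s"
  by (metis sdrop_simps(2) stream.sel(2))

lemma suffixes_within_gen_app_sdrop:
  assumes "suffixes_within c d u" "sdrop m u = gen_app g w"
  shows "lex_le c (gen_app g (sdrop k w)) \<and> lex_le (gen_app g (sdrop k w)) d"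
proof -
  obtain m' where "sdrop m' (gen_app g w) = gen_app g (sdrop k w)"
    using sdrop_gen_app by blast
  with assms(2) have "sdrop (m + m') u = gen_app g (sdrop k w)"
    by (metis sdrop_add)
  with assms(1) show ?thesis
    unfolding suffixes_within_def by metis
qed

lemma in_range_gen_app_L:
  assumes "\<not> shd s" "\<And>n. \<not> (s !! n \<and> s !! Suc n)"
  shows "\<exists>w. s = gen_app L w"
proof (rule gen_app_parse[where P = "\<lambda>s. \<not> shd s \<and> (\<forall>n. \<not> (s !! n \<and> s !! Suc n))"])
  fix s assume "\<not> shd s \<and> (\<forall>n. \<not> (s !! n \<and> s !! Suc n))"
  then have s0: "\<not> s !! 0" and no_11: "\<And>n. \<not> (s !! n \<and> s !! Suc n)"
    by simp_all
  have shift: "\<not> (sdrop k s !! n \<and> sdrop k s !! Suc n)" for k n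
    using adjacent_letters_sdrop[where Q = "\<lambda>a b. \<not> (a \<and> b)", OF no_11] .
  show "\<exists>b s'. s = img L b @- s' \<and> \<not> shd s' \<and> (\<forall>n. \<not> (s' !! n \<and> s' !! Suc n))"
  proof (cases "s !! Suc 0")
    case True
    have "s = stake 2 s @- sdrop 2 s" by (rule stake_sdrop[symmetric])
    moreover have "stake 2 s = img L True"
      using s0 True by (simp add: numeral_2_eq_2)
    moreover have "\<not> shd (sdrop 2 s)"
      using no_11[of "Suc 0"] True by (simp only: sdrop_simps numeral_2_eq_2) simp
    ultimately show ?thesis using shift by metis
  next
    case False
    have "s = stake 1 s @- sdrop 1 s" by (rule stake_sdrop[symmetric])
    moreover have "stake 1 s = img L False"
      using s0 by simp
    moreover have "\<not> shd (sdrop 1 s)"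
      using False by simp
    ultimately show ?thesis using shift by metis
  qed
qed (use assms in blast)

lemma in_range_gen_app_R:
  assumes "\<And>n. s !! n \<or> s !! Suc n"
  shows "\<exists>w. s = gen_app R w"
proof (rule gen_app_parse[where P = "\<lambda>s. \<forall>n. s !! n \<or> s !! Suc n"])
  fix s assume no_00: "\<forall>n. s !! n \<or> s !! Suc n"
  have shift: "sdrop k s !! n \<or> sdrop k s !! Suc n" for k n
    using adjacent_letters_sdrop[where Q = "(\<or>)"] no_00 by blast
  show "\<exists>b s'. s = img R b @- s' \<and> (\<forall>n. s' !! n \<or> s' !! Suc n)"
  proof (cases "s !! 0")
    case True
    have "s = stake 1 s @- sdrop 1 s" by (rule stake_sdrop[symmetric])
    moreover have "stake 1 s = img R True"
      using True by simp
    ultimately show ?thesis using shift by metis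
  next
    case False
    have "s = stake 2 s @- sdrop 2 s" by (rule stake_sdrop[symmetric])
    moreover have "stake 2 s = img R False"
      using False no_00 by (simp add: numeral_2_eq_2) (metis snth.simps)
    ultimately show ?thesis using shift by metis
  qed
qed (use assms in blast)

lemma no_11_below_True_gen_app_L:
  assumes "lex_le (sdrop n u) (True ## gen_app L d)"
  shows "\<not> (u !! n \<and> u !! Suc n)"
proof
  assume "u !! n \<and> u !! Suc n"
  then have "sdrop n u = True ## True ## sdrop (Suc (Suc n)) u"
    by (metis sdrop_eq_snth_Stream)
  with assms have "lex_le (True ## sdrop (Suc (Suc n)) u) (gen_app L d)"
    by simp
  then show False
    by (subst (asm) stream.collapse[symmetric]) simp
qed

lemma desubstitute_L:
  assumes u: "suffixes_within (gen_app L c) (True ## gen_app L d) u"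
  shows "\<exists>m w. sdrop m u = gen_app L w \<and> suffixes_within c (True ## d) w"
proof -
  have upper: "lex_le (sdrop n u) (True ## gen_app L d)" for n
    using u unfolding suffixes_within_def by blast
  define m :: nat where "m = (if shd u then 1 else 0)"
  have "\<not> shd (sdrop m u)"
    using no_11_below_True_gen_app_L[OF upper, of 0] by (cases "shd u") (simp_all add: m_def)
  then obtain w where w: "sdrop m u = gen_app L w"
    using in_range_gen_app_L
      adjacent_letters_sdrop[where Q = "\<lambda>a b. \<not> (a \<and> b)", OF no_11_below_True_gen_app_L[OF upper]]
    by blast
  have "lex_le c (sdrop k w) \<and> lex_le (sdrop k w) (True ## d)" for k
  proof
    show "lex_le c (sdrop k w)"
      using suffixes_within_gen_app_sdrop[OF u w] by simp
    show "lex_le (sdrop k w) (True ## d)"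
    proof (cases "w !! k")
      case False
      then show ?thesis
        using sdrop_eq_snth_Stream[of k w] by (simp add: lex.less_imp_le)
    next
      case True
      obtain m' where "sdrop m' u = gen_app L (sdrop k w)"
        using w sdrop_gen_app by (metis sdrop_add)
      moreover have "gen_app L (sdrop k w) = False ## True ## gen_app L (sdrop (Suc k) w)"
        using True sdrop_eq_snth_Stream[of k w] by simp
      ultimately have "sdrop (Suc m') u = True ## gen_app L (sdrop (Suc k) w)"
        by (rule sdrop_Suc_eqI[OF trans])
      then have "lex_le (sdrop (Suc k) w) d"
        using upper[of "Suc m'"] by simp
      with True show ?thesis
        using sdrop_eq_snth_Stream[of k w] by simp
    qed
  qed
  with w show ?thesis
    unfolding suffixes_within_def by blast
qed

lemma no_00_above_gen_app_R:
  assumes "lex_le (gen_app R c) (sdrop n u)" "\<not> shd c"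
  shows "u !! n \<or> u !! Suc n"
proof (rule ccontr)
  assume "\<not> (u !! n \<or> u !! Suc n)"
  then have "sdrop n u = False ## False ## sdrop (Suc (Suc n)) u"
    by (metis sdrop_eq_snth_Stream)
  moreover have "gen_app R c = False ## True ## gen_app R (stl c)"
    using \<open>\<not> shd c\<close> by (subst gen_app_unfold) simp
  ultimately show False
    using assms(1) by simp
qed

lemma gen_app_R_suffix_after_block: "\<exists>m. sdrop m (gen_app R w) = True ## gen_app R (sdrop (Suc k) w)"
proof -
  obtain m where "sdrop m (gen_app R w) = gen_app R (sdrop k w)"
    using sdrop_gen_app by blast
  then have m: "sdrop m (gen_app R w) = img R (w !! k) @- gen_app R (sdrop (Suc k) w)"
    unfolding gen_app_sdrop_block[of R k w] .
  show ?thesis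
  proof (cases "w !! k")
    case True
    with m show ?thesis by auto
  next
    case False
    with m have "sdrop m (gen_app R w) = False ## True ## gen_app R (sdrop (Suc k) w)"
      by simp
    then show ?thesis
      by (blast intro: sdrop_Suc_eqI)
  qed
qed

lemma desubstitute_R:
  assumes "\<not> shd c" and u: "suffixes_within (gen_app R c) (True ## gen_app R d) u"
  shows "\<exists>m w. sdrop m u = gen_app R w \<and> suffixes_within c d w"
proof -
  obtain w0 where w0: "u = gen_app R w0"
    using in_range_gen_app_R no_00_above_gen_app_R[OF _ \<open>\<not> shd c\<close>] u
    unfolding suffixes_within_def by blast
  txt \<open>Dropping the first letter of \<open>w0\<close> makes every suffix \<open>R (sdrop k w)\<close> preceded by \<open>1\<close>.\<close>
  define w where "w = stl w0"
  obtain m where "sdrop m (gen_app R w0) = gen_app R (sdrop 1 w0)"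
    using sdrop_gen_app by blast
  then have m: "sdrop m u = gen_app R w"
    using w0 unfolding w_def by simp
  have "lex_le c (sdrop k w) \<and> lex_le (sdrop k w) d" for k
  proof
    show "lex_le c (sdrop k w)"
      using suffixes_within_gen_app_sdrop[OF u m] by simp
    obtain m' where "sdrop m' u = True ## gen_app R (sdrop k w)"
      using gen_app_R_suffix_after_block[of w0 k] w0 unfolding w_def by auto
    then show "lex_le (sdrop k w) d"
      using u unfolding suffixes_within_def by (metis gen_app_le_iff lex_le_Stream)
  qed
  with m show ?thesis
    unfolding suffixes_within_def by blast
qed

lemma sdrop_gen_app_M: "sdrop (2 * k) (gen_app M w) = gen_app M (sdrop k w)"
proof (induction k arbitrary: w)
  case (Suc k)
  have "sdrop (2 * Suc k) (gen_app M w) = sdrop (2 * k) (gen_app M (stl w))"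
    by (subst gen_app_unfold) (simp add: img_M)
  then show ?case using Suc.IH by simp
qed simp

lemma in_range_gen_app_M:
  assumes "\<And>i. s !! (2 * i) \<noteq> s !! Suc (2 * i)"
  shows "\<exists>w. s = gen_app M w"
proof (rule gen_app_parse[where P = "\<lambda>s. \<forall>i. s !! (2 * i) \<noteq> s !! Suc (2 * i)"])
  fix s :: word assume pairs: "\<forall>i. s !! (2 * i) \<noteq> s !! Suc (2 * i)"
  have "s = stake 2 s @- sdrop 2 s" by (rule stake_sdrop[symmetric])
  moreover have "stake 2 s = img M (s !! 0)"
    using pairs[rule_format, of 0] by (simp add: numeral_2_eq_2 img_M)
  moreover have "\<forall>i. sdrop 2 s !! (2 * i) \<noteq> sdrop 2 s !! Suc (2 * i)"
    using pairs by (metis sdrop_snth mult_Suc_right add_Suc_right add_2_eq_Suc)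
  ultimately show "\<exists>b s'. s = img M b @- s' \<and> (\<forall>i. s' !! (2 * i) \<noteq> s' !! Suc (2 * i))"
    by metis
qed (use assms in blast)

lemma alternating_eq_gen_app_M_zeros:
  assumes "\<not> shd s" "\<And>n. s !! n \<noteq> s !! Suc n"
  shows "s = gen_app M (sconst False)"
proof (rule gen_app_coinduct[where Rel = "\<lambda>s w. w = sconst False \<and> \<not> shd s \<and> (\<forall>n. s !! n \<noteq> s !! Suc n)"])
  fix s w assume s: "w = sconst False \<and> \<not> shd s \<and> (\<forall>n. s !! n \<noteq> s !! Suc n)"
  then have "s !! 0 \<noteq> s !! Suc 0" "s !! Suc 0 \<noteq> s !! Suc (Suc 0)"
    by blast+
  have "s = stake 2 s @- sdrop 2 s" by (rule stake_sdrop[symmetric])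
  moreover have "stake 2 s = img M (shd w)"
    using s \<open>s !! 0 \<noteq> s !! Suc 0\<close> by (simp add: numeral_2_eq_2)
  moreover have "\<not> shd (sdrop 2 s)"
    using s \<open>s !! 0 \<noteq> s !! Suc 0\<close> \<open>s !! Suc 0 \<noteq> s !! Suc (Suc 0)\<close>
    by (simp add: numeral_2_eq_2)
  moreover have "\<forall>n. sdrop 2 s !! n \<noteq> sdrop 2 s !! Suc n"
    using s adjacent_letters_sdrop[where Q = "(\<noteq>)"] by blast
  ultimately show "\<exists>s'. s = img M (shd w) @- s' \<and> stl w = sconst False \<and> \<not> shd s' \<and> (\<forall>n. s' !! n \<noteq> s' !! Suc n)"
    using s by (metis siterate.simps(2) id_apply)
qed (use assms in blast)

lemma alternating_eventually_gen_app_M_zeros: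
  assumes "\<And>n. u !! n \<noteq> u !! Suc n"
  shows "\<exists>m. sdrop m u = gen_app M (sconst False)"
proof -
  define m :: nat where "m = (if shd u then 1 else 0)"
  have "\<not> shd (sdrop m u)"
    using assms[of 0] by (cases "shd u") (simp_all add: m_def)
  moreover have "sdrop m u !! n \<noteq> sdrop m u !! Suc n" for n
    using assms adjacent_letters_sdrop[where Q = "(\<noteq>)"] by blast
  ultimately show ?thesis
    using alternating_eq_gen_app_M_zeros by blast
qed

lemma snth_gen_app_M:
  "gen_app M w !! (2 * k) = w !! k" "gen_app M w !! Suc (2 * k) = (\<not> w !! k)"
  using sdrop_snth[of "2 * k" "gen_app M w" 0] sdrop_snth[of "2 * k" "gen_app M w" 1]
  by (simp_all add: sdrop_gen_app_M gen_app_unfold[of M "sdrop k w"] img_M)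

lemma sdrop_eq_two_letters: "sdrop q u = u !! q ## u !! Suc q ## sdrop (Suc (Suc q)) u"
  by (metis sdrop_eq_snth_Stream)

lemma alternation_into_double_less_gen_app_M:
  assumes "\<not> u !! q"
    and "\<And>l. q \<le> l \<Longrightarrow> l < q + 2 * m \<Longrightarrow> u !! l \<noteq> u !! Suc l"
    and "u !! (q + 2 * m) = u !! Suc (q + 2 * m)"
  shows "lex_less (sdrop q u) (gen_app M c)"
  using assms
proof (induction m arbitrary: q c)
  case 0
  then show ?case
    by (subst sdrop_eq_two_letters, subst gen_app_unfold) (cases "shd c"; simp add: img_M)
next
  case (Suc m)
  have "u !! Suc q" "\<not> u !! Suc (Suc q)"
    using Suc.prems(1) Suc.prems(2)[of q] Suc.prems(2)[of "Suc q"] by auto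
  moreover have "lex_less (sdrop (Suc (Suc q)) u) (gen_app M (stl c))"
  proof (rule Suc.IH)
    show "u !! l \<noteq> u !! Suc l" if "Suc (Suc q) \<le> l" "l < Suc (Suc q) + 2 * m" for l
      using Suc.prems(2) that by simp
    show "u !! (Suc (Suc q) + 2 * m) = u !! Suc (Suc (Suc q) + 2 * m)"
      using Suc.prems(3) by simp
  qed fact
  ultimately show ?case
    using Suc.prems(1)
    by (subst sdrop_eq_two_letters, subst gen_app_unfold) (cases "shd c"; simp add: img_M)
qed

lemma zero_double_not_followed_by_odd_double:
  assumes lower: "\<And>k. lex_le (False ## gen_app M c) (sdrop k u)"
    and "\<not> u !! p" "\<not> u !! Suc p"
    and "\<And>l. Suc p \<le> l \<Longrightarrow> l < Suc p + 2 * m \<Longrightarrow> u !! l \<noteq> u !! Suc l"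
  shows "u !! (Suc p + 2 * m) \<noteq> u !! Suc (Suc p + 2 * m)"
proof
  assume "u !! (Suc p + 2 * m) = u !! Suc (Suc p + 2 * m)"
  with assms(3,4) have "lex_less (sdrop (Suc p) u) (gen_app M c)"
    by (rule alternation_into_double_less_gen_app_M)
  then have "lex_less (sdrop p u) (False ## gen_app M c)"
    using assms(2) sdrop_eq_snth_Stream[of p u] by simp
  with lower[of p] show False
    using lex.not_le by blast
qed

lemma double_not_followed_by_odd_double:
  assumes u: "suffixes_within (False ## gen_app M c) (True ## gen_app M d) u"
    and double: "u !! p = u !! Suc p"
    and alternating: "\<And>l. Suc p \<le> l \<Longrightarrow> l < Suc p + 2 * m \<Longrightarrow> u !! l \<noteq> u !! Suc l"
  shows "u !! (Suc p + 2 * m) \<noteq> u !! Suc (Suc p + 2 * m)"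
proof (cases "u !! p")
  case False
  with u double alternating show ?thesis
    by (intro zero_double_not_followed_by_odd_double[of c u p m])
      (simp_all add: suffixes_within_def del: snth.simps(2))
next
  case True
  have "suffixes_within (False ## gen_app M (flip d)) (True ## gen_app M (flip c)) (flip u)"
    using suffixes_within_flip[OF u] by (simp add: flip_gen_app_M)
  then have "flip u !! (Suc p + 2 * m) \<noteq> flip u !! Suc (Suc p + 2 * m)"
    using True double alternating
    by (intro zero_double_not_followed_by_odd_double[of "flip d" "flip u" p m])
      (simp_all add: suffixes_within_def del: snth.simps(2))
  then show ?thesis
    by (simp del: snth.simps(2))
qed

lemma doubles_at_even_distance:
  assumes u: "suffixes_within (False ## gen_app M c) (True ## gen_app M d) u"
    and "u !! p = u !! Suc p" "u !! q = u !! Suc q" "p \<le> q"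
  shows "even (q - p)"
  using assms(2-4)
proof (induction "q - p" arbitrary: p rule: less_induct)
  case less
  show ?case
  proof (cases "p = q")
    case False
    define q' where "q' = (LEAST q'. p < q' \<and> u !! q' = u !! Suc q')"
    have q': "p < q'" "u !! q' = u !! Suc q'" "q' \<le> q"
      using LeastI[of "\<lambda>q'. p < q' \<and> u !! q' = u !! Suc q'" q] Least_le[of _ q]
        False less.prems unfolding q'_def by auto
    have alternating: "u !! l \<noteq> u !! Suc l" if "p < l" "l < q'" for l
      using not_less_Least[of l "\<lambda>q'. p < q' \<and> u !! q' = u !! Suc q'"] that
      unfolding q'_def by blast
    have "even (q' - p)"
    proof (rule ccontr)
      assume "odd (q' - p)"
      then have "q' = Suc p + 2 * ((q' - p) div 2)"
        using q'(1) by presburger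
      with double_not_followed_by_odd_double[OF u less.prems(1)] alternating q'(2) show False
        by (metis Suc_le_eq)
    qed
    moreover have "even (q - q')"
    proof (cases "q' = q")
      case False
      then show ?thesis
        using less.hyps[of q'] q' less.prems by simp
    qed simp
    ultimately show ?thesis
      using q' by presburger
  qed simp
qed

text \<open>
  The letter in front of the suffix \<open>M (sdrop k w)\<close> of \<open>u\<close> is \<open>u !! (p + 2 * k)\<close>. If it
  is \<open>0\<close>, the lower bound of \<open>u\<close> passes to \<open>sdrop k w\<close> directly; if it is \<open>1\<close>, then
  \<open>sdrop (k - 1) w\<close> starts with \<open>0\<close> and the bound passes from \<open>k - 1\<close> to \<open>k\<close>.
\<close>

lemma desubstitute_M_lower_after_zero:
  assumes lower: "\<And>k. lex_le (False ## gen_app M c) (sdrop k u)"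
    and w: "sdrop (Suc p) u = gen_app M w" and "\<not> u !! (p + 2 * k)"
  shows "lex_le c (sdrop k w)"
proof -
  have "sdrop (Suc (p + 2 * k)) u = gen_app M (sdrop k w)"
    using w sdrop_gen_app_M[of k w] by (metis sdrop_add add_Suc)
  with \<open>\<not> u !! (p + 2 * k)\<close> have "sdrop (p + 2 * k) u = False ## gen_app M (sdrop k w)"
    using sdrop_eq_snth_Stream[of "p + 2 * k" u] by simp
  then show ?thesis
    using lower[of "p + 2 * k"] by simp
qed

lemma desubstitute_M_lower:
  assumes lower: "\<And>k. lex_le (False ## gen_app M c) (sdrop k u)"
    and "\<not> shd c" "u !! p = u !! Suc p" and w: "sdrop (Suc p) u = gen_app M w"
  shows "lex_le c (sdrop k w)"
proof (induction k)
  case 0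
  show ?case
  proof (cases "u !! p")
    case True
    then have "shd w"
      using \<open>u !! p = u !! Suc p\<close> w sdrop_snth[of "Suc p" u 0] snth_gen_app_M(1)[of w 0] by simp
    with \<open>\<not> shd c\<close> show ?thesis
      by (cases c; cases w) (simp add: lex_le_def)
  qed (use desubstitute_M_lower_after_zero[OF lower w, of 0] in simp)
next
  case (Suc k)
  show ?case
  proof (cases "u !! (p + 2 * Suc k)")
    case True
    then have "\<not> w !! k"
      using w sdrop_snth[of "Suc p" u "Suc (2 * k)"] snth_gen_app_M(2)[of w k] by simp
    then have "sdrop k w = False ## sdrop (Suc k) w"
      using sdrop_eq_snth_Stream[of k w] by simp
    moreover have "c = False ## stl c"
      using \<open>\<not> shd c\<close> by (metis stream.collapse)
    ultimately have "lex_le (stl c) (sdrop (Suc k) w)"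
      using Suc.IH by (metis lex_le_Stream)
    then show ?thesis
      using lex_le_False_Stream[of "stl c"] \<open>c = False ## stl c\<close>
      by (metis lex.order.trans)
  qed (use desubstitute_M_lower_after_zero[OF lower w] in blast)
qed

lemma desubstitute_M:
  assumes "\<not> shd c" "shd d" and u: "suffixes_within (False ## gen_app M c) (True ## gen_app M d) u"
  shows "(\<exists>m w. sdrop m u = gen_app M w \<and> suffixes_within c d w)
    \<or> (\<exists>m. sdrop m u = gen_app M (sconst False))"
proof (cases "\<exists>p. u !! p = u !! Suc p")
  case False
  then show ?thesis
    using alternating_eventually_gen_app_M_zeros by blast
next
  case True
  then obtain p where double: "u !! p = u !! Suc p" by blast
  have "sdrop (Suc p) u !! (2 * i) \<noteq> sdrop (Suc p) u !! Suc (2 * i)" for i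
  proof
    assume "sdrop (Suc p) u !! (2 * i) = sdrop (Suc p) u !! Suc (2 * i)"
    then have "even (Suc p + 2 * i - p)"
      using doubles_at_even_distance[OF u double, of "Suc p + 2 * i"] by (simp add: sdrop_snth)
    then show False by simp
  qed
  then obtain w where w: "sdrop (Suc p) u = gen_app M w"
    using in_range_gen_app_M by blast
  have "lex_le c (sdrop k w)" for k
    using desubstitute_M_lower[OF _ \<open>\<not> shd c\<close> double w] u
    unfolding suffixes_within_def by blast
  moreover have "lex_le (flip d) (flip (sdrop k w))" for k
  proof -
    have "suffixes_within (False ## gen_app M (flip d)) (True ## gen_app M (flip c)) (flip u)"
      using suffixes_within_flip[OF u] by (simp add: flip_gen_app_M)
    moreover have "sdrop (Suc p) (flip u) = gen_app M (flip w)"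
      using w by (simp add: flip_gen_app_M)
    ultimately show ?thesis
      using desubstitute_M_lower[of "flip d" "flip u" p "flip w" k] \<open>shd d\<close> double
      unfolding suffixes_within_def by (simp del: snth.simps(2))
  qed
  ultimately have "suffixes_within c d w"
    unfolding suffixes_within_def by simp
  with w show ?thesis by blast
qed

section \<open>The induction on \<open>\<sigma>\<close>\<close>

lemma not_shd_winf: "False \<in> sset x \<Longrightarrow> \<not> shd (winf x)"
  using winf_le_sdrop lex_le_shd by (metis sdrop_simps(1) sset_range imageE)

lemma shd_wsup: "True \<in> sset y \<Longrightarrow> shd (wsup y)"
  using sdrop_le_wsup lex_le_shd by (metis sdrop_simps(1) sset_range imageE)

lemma desubstitute_step:
  assumes "False \<in> sset x" "True \<in> sset y"
    and u: "suffixes_within (winf (gen_app g x)) (wsup (gen_app g y)) u"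
  shows "(\<exists>m w. sdrop m u = gen_app g w \<and> suffixes_within (winf x) (wsup y) w)
    \<or> g = M \<and> (\<exists>m. sdrop m u = gen_app M (sconst False))"
proof (cases g)
  case L
  have "wsup y = True ## stl (wsup y)"
    using shd_wsup[OF assms(2)] by (metis stream.collapse)
  with u L have "suffixes_within (gen_app L (winf x)) (True ## gen_app L (stl (wsup y))) u"
    using winf_gen_app_L_ge wsup_gen_app_L_le suffixes_within_mono by metis
  with L \<open>wsup y = True ## stl (wsup y)\<close> show ?thesis
    using desubstitute_L by metis
next
  case M
  with u have "suffixes_within (False ## gen_app M (winf x)) (True ## gen_app M (wsup y)) u"
    using winf_gen_app_M_ge wsup_gen_app_M_le suffixes_within_mono by metis
  with M show ?thesis
    using desubstitute_M not_shd_winf[OF assms(1)] shd_wsup[OF assms(2)] by blast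
next
  case R
  with u have "suffixes_within (gen_app R (winf x)) (True ## gen_app R (wsup y)) u"
    using winf_gen_app_R_ge[OF not_shd_winf[OF assms(1)]] wsup_gen_app_R_le suffixes_within_mono
    by metis
  with R show ?thesis
    using desubstitute_R not_shd_winf[OF assms(1)] by blast
qed

definition desubstitutable :: "gen list \<Rightarrow> word \<Rightarrow> bool" where
  "desubstitutable \<sigma> u \<longleftrightarrow> (\<exists>k v. sdrop k u = subst_app \<sigma> v)
    \<or> (\<exists>k \<rho> \<tau>. \<sigma> = (\<rho> @ [M]) @ \<tau> \<and> sdrop k u = subst_app (\<rho> @ [M]) (sconst False))"

lemma desubstitutable_Cons:
  assumes "sdrop m u = gen_app g w" "desubstitutable \<sigma> w"
  shows "desubstitutable (g # \<sigma>) u"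
proof -
  have suffix: "\<exists>m'. sdrop m' u = gen_app g (sdrop k w)" for k
    using assms(1) sdrop_gen_app by (metis sdrop_add)
  from assms(2) consider (image) k v where "sdrop k w = subst_app \<sigma> v"
    | (zeros) k \<rho> \<tau> where "\<sigma> = (\<rho> @ [M]) @ \<tau>" "sdrop k w = subst_app (\<rho> @ [M]) (sconst False)"
    unfolding desubstitutable_def by blast
  then show ?thesis
  proof cases
    case image
    then show ?thesis
      unfolding desubstitutable_def using suffix[of k] by auto
  next
    case zeros
    then show ?thesis
      unfolding desubstitutable_def using suffix[of k] by (metis append_Cons subst_app_Cons)
  qed
qed

lemma desubstitutable_if_suffixes_within:
  "suffixes_within (winf (subst_app \<sigma> (True ## sconst False))) (wsup (subst_app \<sigma> (False ## sconst True))) u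
    \<Longrightarrow> desubstitutable \<sigma> u"
proof (induction \<sigma> arbitrary: u)
  case Nil
  then show ?case
    unfolding desubstitutable_def by (metis sdrop.simps(1) subst_app_Nil)
next
  case (Cons g \<sigma>)
  have x: "False \<in> sset (subst_app \<sigma> (True ## sconst False))"
    and y: "True \<in> sset (subst_app \<sigma> (False ## sconst True))"
    by (simp_all add: sset_subst_app)
  have "(\<exists>m w. sdrop m u = gen_app g w \<and> suffixes_within
      (winf (subst_app \<sigma> (True ## sconst False))) (wsup (subst_app \<sigma> (False ## sconst True))) w)
    \<or> g = M \<and> (\<exists>m. sdrop m u = gen_app M (sconst False))"
    using desubstitute_step[OF x y] Cons.prems by (simp only: subst_app_Cons)
  then show ?case
  proof (elim disjE exE conjE)
    fix m w
    assume "sdrop m u = gen_app g w"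
      "suffixes_within (winf (subst_app \<sigma> (True ## sconst False))) (wsup (subst_app \<sigma> (False ## sconst True))) w"
    with Cons.IH show ?case
      by (blast intro: desubstitutable_Cons)
  next
    fix m assume "g = M" "sdrop m u = gen_app M (sconst False)"
    then show ?case
      unfolding desubstitutable_def by (metis append_Nil append_Cons subst_app_Cons subst_app_Nil)
  qed
qed

theorem lemma2p6:
  fixes u :: word and \<sigma> :: "gen list"
  assumes "lex_le (winf (subst_app \<sigma> (True ## sconst False))) (winf u)"
    and "lex_le (wsup u) (wsup (subst_app \<sigma> (False ## sconst True)))"
  shows "(\<exists>k v. sdrop k u = subst_app \<sigma> v)
    \<or> (\<exists>k \<rho> \<tau>. \<sigma> = (\<rho> @ [M]) @ \<tau> \<and> sdrop k u = subst_app (\<rho> @ [M]) (sconst False))"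
  using desubstitutable_if_suffixes_within[of \<sigma> u] assms
  unfolding suffixes_within_iff desubstitutable_def by blast
end
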